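(* Assume $a/b>\sqrt2$, $|u|<u_{\max}$ and $a^2+(u^2-2)c^2\ne0$. Let $\mathcal{C}^\dagger$ be the unit circle centered at the focus $f_1=(-c,0)$. The images of the four vertices $P_1,\dots,P_4$ of the self-intersected 4-periodic under inversion in $\mathcal{C}^\dagger$ are collinear and lie on the radical axis of $\mathcal{C}^\dagger$ and $\mathcal{C}$; likewise the images of the four vertices of its outer polygon under inversion in $\mathcal{C}^\dagger$ are collinear and lie on the radical axis of $\mathcal{C}^\dagger$ and $\mathcal{C}'$.
   Context: The elliptic billiard is $\mathcal{E}: x^2/a^2+y^2/b^2=1$, $a>b>0$, $c=\sqrt{a^2-b^2}$, foci $f_1=(-c,0)$, $f_2=(c,0)$. For $a/b>\sqrt2$ the self-intersected 4-periodics are parametrized by $u$, $|u|\le u_{\max}:=\frac{a}{c^2}\sqrt{a^2-2b^2}$, with vertices $P_1=(au,\,b\sqrt{1-u^2})$, $P_3=(-au,\,b\sqrt{1-u^2})$, $P_2=\left(-\frac{a\sqrt{a^2(a^2-2b^2)-c^4u^2}}{c^2\sqrt{1-u^2}},-\frac{b^3}{c^2\sqrt{1-u^2}}\right)$, $P_4=\left(\frac{a\sqrt{a^2(a^2-2b^2)-c^4u^2}}{c^2\sqrt{1-u^2}},-\frac{b^3}{c^2\sqrt{1-u^2}}\right)$. The outer polygon has vertices $P_i'$ = intersection of the tangent lines to $\mathcal{E}$ at $P_i$ and $P_{i+1}$ (indices mod 4). $\mathcal{C}$ is the circle with center $C=\left(0,\frac{c^2u^2-a^2+2b^2}{2b\sqrt{1-u^2}}\right)$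 and radius $R=\frac{a^2-c^2u^2}{2b\sqrt{1-u^2}}$; $\mathcal{C}'$ is the circle with center $C'=\left(0,-\frac{2bc^2\sqrt{1-u^2}}{a^2+(u^2-2)c^2}\right)$ and radius $\left|\frac{c(c^2u^2-a^2)}{a^2+(u^2-2)c^2}\right|$. Inversion in a circle of center $Z$ and radius $\rho$ sends $X\neq Z$ to $Z+\rho^2(X-Z)/|X-Z|^2$. *)

theory Defs
  imports "HOL-Analysis.Analysis"
begin

type_synonym pt = "real \<times> real"

definition focal_c :: "real \<Rightarrow> real \<Rightarrow> real" where
  "focal_c a b = sqrt (a^2 - b^2)"

definition u_max :: "real \<Rightarrow> real \<Rightarrow> real" where
  "u_max a b = a / (focal_c a b)^2 * sqrt (a^2 - 2*b^2)"

definition P1 :: "real \<Rightarrow> real \<Rightarrow> real \<Rightarrow> pt" where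
  "P1 a b u = (a*u, b * sqrt (1 - u^2))"
definition P3 :: "real \<Rightarrow> real \<Rightarrow> real \<Rightarrow> pt" where
  "P3 a b u = (-a*u, b * sqrt (1 - u^2))"
definition P2 :: "real \<Rightarrow> real \<Rightarrow> real \<Rightarrow> pt" where
  "P2 a b u = (let c = focal_c a b in
     (- (a * sqrt (a^2*(a^2 - 2*b^2) - c^4*u^2)) / (c^2 * sqrt (1 - u^2)),
      - (b^3) / (c^2 * sqrt (1 - u^2))))"
definition P4 :: "real \<Rightarrow> real \<Rightarrow> real \<Rightarrow> pt" where
  "P4 a b u = (let c = focal_c a b in
     ((a * sqrt (a^2*(a^2 - 2*b^2) - c^4*u^2)) / (c^2 * sqrt (1 - u^2)),
      - (b^3) / (c^2 * sqrt (1 - u^2))))"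

definition tangent_line :: "real \<Rightarrow> real \<Rightarrow> pt \<Rightarrow> pt set" where
  "tangent_line a b P = {X. fst X * fst P / a^2 + snd X * snd P / b^2 = 1}"

text \<open>Vertex of the outer polygon: intersection of tangents at P and Q.\<close>
definition tangent_meet :: "real \<Rightarrow> real \<Rightarrow> pt \<Rightarrow> pt \<Rightarrow> pt" where
  "tangent_meet a b P Q = (THE X. X \<in> tangent_line a b P \<and> X \<in> tangent_line a b Q)"

definition inversion :: "pt \<Rightarrow> real \<Rightarrow> pt \<Rightarrow> pt" where
  "inversion Z \<rho> X = Z + (\<rho>^2 / (norm (X - Z))^2) *\<^sub>R (X - Z)"

definition radical_axis :: "pt \<Rightarrow> real \<Rightarrow> pt \<Rightarrow> real \<Rightarrow> pt set" where
  "radical_axis Z1 r1 Z2 r2 = {X. (norm (X - Z1))^2 - r1^2 = (norm (X - Z2))^2 - r2^2}"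

definition circC_center :: "real \<Rightarrow> real \<Rightarrow> real \<Rightarrow> pt" where
  "circC_center a b u = (let c = focal_c a b in
     (0, (c^2*u^2 - a^2 + 2*b^2) / (2*b * sqrt (1 - u^2))))"
definition circC_radius :: "real \<Rightarrow> real \<Rightarrow> real \<Rightarrow> real" where
  "circC_radius a b u = (let c = focal_c a b in (a^2 - c^2*u^2) / (2*b * sqrt (1 - u^2)))"

definition circC'_center :: "real \<Rightarrow> real \<Rightarrow> real \<Rightarrow> pt" where
  "circC'_center a b u = (let c = focal_c a b in
     (0, - (2*b*c^2 * sqrt (1 - u^2)) / (a^2 + (u^2 - 2)*c^2)))"
definition circC'_radius :: "real \<Rightarrow> real \<Rightarrow> real \<Rightarrow> real" where
  "circC'_radius a b u = (let c = focal_c a b in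
     \<bar>c*(c^2*u^2 - a^2) / (a^2 + (u^2 - 2)*c^2)\<bar>)"

end

theory Submission
  imports Defs
begin

(* If the pole f of an inversion lies on a circle (Z, R), then every other point of that circle is
   mapped to a point having the same power with respect to the circle of inversion and to (Z, R);
   so the image lies on their radical axis, a line because Z \<noteq> f. It therefore suffices to check
   that the focus f1 lies on C and on C', that P1, ..., P4 lie on C and that the outer vertices lie
   on C'. Both circles are centred on the y-axis, and the configuration is symmetric in that axis
   (P3, P4 and the last two outer vertices are mirror images of P1, P2 and the first two), so only
   half of the points have to be checked by computation. *)

lemma power2_norm_Pair: "(norm (x, y))^2 = (norm x)^2 + (norm y)^2"
  by (simp add: norm_Pair)

lemma radical_axis_eq_hyperplane:
  "radical_axis f \<rho> Z R = {X. (Z - f) \<bullet> X = ((norm Z)^2 - (norm f)^2 + \<rho>^2 - R^2) / 2}"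
  unfolding radical_axis_def power2_norm_eq_inner
  by (auto simp: inner_diff_left inner_diff_right inner_commute)

lemma collinear_radical_axis:
  assumes "Z \<noteq> f"
  shows "collinear (radical_axis f \<rho> Z R)"
  unfolding radical_axis_eq_hyperplane collinear_aff_dim
  by (subst aff_dim_hyperplane) (use assms in auto)

lemma inversion_mem_radical_axis:
  assumes "(norm (f - Z))^2 = R^2" "(norm (X - Z))^2 = R^2" "X \<noteq> f"
  shows "inversion f \<rho> X \<in> radical_axis f \<rho> Z R"
proof -
  define v where "v = X - f"
  define w where "w = Z - f"
  define k where "k = \<rho>^2 / (v \<bullet> v)"
  have v: "v \<bullet> v \<noteq> 0" using assms(3) by (simp add: v_def)
  have w: "w \<bullet> w = R^2" using assms(1) by (simp add: w_def power2_norm_eq_inner[symmetric] norm_minus_commute)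
  have "(v - w) \<bullet> (v - w) = R^2" using assms(2) by (simp add: v_def w_def power2_norm_eq_inner)
  then have vw: "2 * (v \<bullet> w) = v \<bullet> v"
    using w by (simp add: inner_diff_left inner_diff_right inner_commute)
  have inv: "inversion f \<rho> X = f + k *\<^sub>R v"
    by (simp add: inversion_def v_def k_def power2_norm_eq_inner)
  have "(norm (k *\<^sub>R v - w))^2 = k^2 * (v \<bullet> v) - k * (2 * (v \<bullet> w)) + w \<bullet> w"
    unfolding power2_norm_eq_inner
    by (simp add: inner_diff_left inner_diff_right inner_commute power2_eq_square)
  also have "\<dots> = (norm (k *\<^sub>R v))^2 - \<rho>^2 + R^2"
    using v vw w unfolding power2_norm_eq_inner by (simp add: k_def power2_eq_square)
  finally show ?thesis
    unfolding radical_axis_def inv by (simp add: w_def algebra_simps)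
qed

lemma inversion_image_of_circle_through_pole:
  assumes "(norm (f - Z))^2 = R^2" "Z \<noteq> f" "\<forall>X \<in> S. (norm (X - Z))^2 = R^2" "f \<notin> S"
  shows "collinear (inversion f \<rho> ` S) \<and> inversion f \<rho> ` S \<subseteq> radical_axis f \<rho> Z R"
proof -
  have "inversion f \<rho> ` S \<subseteq> radical_axis f \<rho> Z R"
    using assms(1,3,4) by (blast intro: inversion_mem_radical_axis)
  then show ?thesis using collinear_subset collinear_radical_axis[OF assms(2)] by blast
qed

definition reflect_y_axis :: "pt \<Rightarrow> pt" where
  "reflect_y_axis X = (- fst X, snd X)"

lemma reflect_y_axis_reflect_y_axis [simp]: "reflect_y_axis (reflect_y_axis X) = X"
  by (simp add: reflect_y_axis_def)

lemma tangent_line_reflect: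
  "reflect_y_axis X \<in> tangent_line a b (reflect_y_axis P) \<longleftrightarrow> X \<in> tangent_line a b P"
  by (simp add: tangent_line_def reflect_y_axis_def add.commute)

lemma norm_reflect_y_axis_diff:
  "fst Z = 0 \<Longrightarrow> norm (reflect_y_axis X - Z) = norm (X - Z)"
  by (cases X, cases Z) (simp add: reflect_y_axis_def norm_Pair)

lemma P3_eq_reflect: "P3 a b u = reflect_y_axis (P1 a b u)"
  by (simp add: P1_def P3_def reflect_y_axis_def)

lemma P1_eq_reflect: "P1 a b u = reflect_y_axis (P3 a b u)"
  by (simp add: P1_def P3_def reflect_y_axis_def)

lemma P4_eq_reflect: "P4 a b u = reflect_y_axis (P2 a b u)"
  by (simp add: P2_def P4_def reflect_y_axis_def Let_def)

lemma tangent_meet_eqI: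
  assumes "a \<noteq> 0" "b \<noteq> 0" "fst P * snd Q \<noteq> snd P * fst Q"
    and "X \<in> tangent_line a b P" "X \<in> tangent_line a b Q"
  shows "tangent_meet a b P Q = X"
  unfolding tangent_meet_def
proof (rule the_equality)
  show "X \<in> tangent_line a b P \<and> X \<in> tangent_line a b Q" using assms by simp
  fix Y assume Y: "Y \<in> tangent_line a b P \<and> Y \<in> tangent_line a b Q"
  define e1 where "e1 = (fst Y - fst X) / a^2"
  define e2 where "e2 = (snd Y - snd X) / b^2"
  have eP: "fst P * e1 + snd P * e2 = 0" and eQ: "fst Q * e1 + snd Q * e2 = 0"
    using assms(4,5) Y unfolding tangent_line_def e1_def e2_def
    by (simp_all add: diff_divide_distrib right_diff_distrib algebra_simps)
  have "(fst P * snd Q - snd P * fst Q) * e1 = 0" "(fst P * snd Q - snd P * fst Q) * e2 = 0"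
    using arg_cong2[OF eP eQ, of "\<lambda>s t. snd Q * s - snd P * t"]
      arg_cong2[OF eP eQ, of "\<lambda>s t. fst P * t - fst Q * s"]
    by (simp_all add: algebra_simps)
  then have "e1 = 0" "e2 = 0" using assms(3) by simp_all
  then show "Y = X" using assms(1,2) by (simp add: e1_def e2_def prod_eq_iff)
qed

lemma tangent_meet_reflect:
  assumes "a \<noteq> 0" "b \<noteq> 0" "fst P * snd Q \<noteq> snd P * fst Q"
    and "X \<in> tangent_line a b P" "X \<in> tangent_line a b Q"
  shows "tangent_meet a b (reflect_y_axis P) (reflect_y_axis Q) = reflect_y_axis X"
proof (rule tangent_meet_eqI)
  show "fst (reflect_y_axis P) * snd (reflect_y_axis Q) \<noteq> snd (reflect_y_axis P) * fst (reflect_y_axis Q)"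
    using assms(3) by (simp add: reflect_y_axis_def)
qed (use assms in \<open>simp_all add: tangent_line_reflect\<close>)

locale self_intersected_4periodic =
  fixes a b u :: real
  assumes b_pos: "0 < b" and b_less_a: "b < a" and aspect: "sqrt 2 < a / b"
    and u_bound: "\<bar>u\<bar> < u_max a b"
    and denominator_nonzero: "a^2 + (u^2 - 2) * (focal_c a b)^2 \<noteq> 0"
begin

definition c :: real where "c = focal_c a b"
definition s :: real where "s = sqrt (1 - u^2)"
definition r :: real where "r = sqrt (a^2 * (a^2 - 2*b^2) - c^4 * u^2)"
definition D :: real where "D = a^2 + (u^2 - 2) * c^2"
definition w :: real where "w = a^2 - c^2 * u^2"
definition g1 :: real where "g1 = r * s - b^2 * u"
definition g2 :: real where "g2 = r * s + b^2 * u"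

lemma D_nonzero: "D \<noteq> 0"
  using denominator_nonzero by (simp add: D_def c_def)

lemma a_pos: "0 < a"
  using b_pos b_less_a by simp

lemma c_sq: "c^2 = a^2 - b^2" and c_pos: "0 < c"
proof -
  have "b^2 < a^2" using b_pos b_less_a by (simp add: power_strict_mono)
  then show "c^2 = a^2 - b^2" "0 < c" by (simp_all add: c_def focal_c_def)
qed

lemma two_b_sq_less: "2 * b^2 < a^2"
proof -
  have "sqrt 2 * b < a" using aspect b_pos by (simp add: pos_less_divide_eq)
  then have "(sqrt 2 * b)^2 < a^2" using b_pos by (intro power_strict_mono) auto
  then show ?thesis by (simp add: power_mult_distrib)
qed

lemma c4_u2_less: "c^4 * u^2 < a^2 * (a^2 - 2*b^2)"
proof -
  have "\<bar>u\<bar> * c^2 < a * sqrt (a^2 - 2*b^2)"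
    using u_bound c_pos by (simp add: u_max_def c_def [symmetric] field_simps)
  then have "(\<bar>u\<bar> * c^2)^2 < (a * sqrt (a^2 - 2*b^2))^2"
    by (intro power_strict_mono) auto
  then have "u^2 * c^4 < a^2 * (a^2 - 2*b^2)"
    using two_b_sq_less by (simp add: power_mult_distrib power2_abs flip: power_mult)
  then show ?thesis by (simp add: mult.commute)
qed

lemma r_sq: "r^2 = a^2 * (a^2 - 2*b^2) - c^4 * u^2"
  using c4_u2_less by (simp add: r_def)

lemma u_sq_less: "u^2 < 1"
proof -
  have "a^2 * (a^2 - 2*b^2) = c^4 - b^4" using c_sq by algebra
  moreover have "0 < b^4" using b_pos by simp
  ultimately have "c^4 * u^2 < c^4 * 1" using c4_u2_less by linarith
  then show ?thesis using c_pos by (simp only: mult_less_cancel_left) simp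
qed

lemma s_sq: "s^2 = 1 - u^2" and s_pos: "0 < s"
  using u_sq_less by (simp_all add: s_def)

lemma c_u_sq_less: "c^2 * u^2 < a^2"
proof -
  have "c^2 * u^2 \<le> c^2" using u_sq_less by (simp add: mult_left_le)
  moreover have "c^2 < a^2" using c_sq b_pos by simp
  ultimately show ?thesis by linarith
qed

(* So D \<noteq> 0 says exactly that no two consecutive tangents are parallel. *)
lemma g1_g2: "g1 * g2 = - D * (c^2 * s^2 + b^2)"
  unfolding g1_def g2_def D_def using c_sq s_sq r_sq by algebra

lemma g1_nonzero: "g1 \<noteq> 0" and g2_nonzero: "g2 \<noteq> 0"
proof -
  have "c^2 * s^2 + b^2 > 0" using b_pos by (simp add: add_nonneg_pos)
  then have "g1 * g2 \<noteq> 0" using g1_g2 D_nonzero by simp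
  then show "g1 \<noteq> 0" "g2 \<noteq> 0" by auto
qed

lemma P1_eq: "P1 a b u = (a*u, b * s)"
  by (simp add: P1_def s_def)

lemma P2_eq: "P2 a b u = (-(a*r) / (c^2 * s), -(b^3) / (c^2 * s))"
  by (simp add: P2_def Let_def c_def s_def r_def)

lemma P3_eq: "P3 a b u = (-(a*u), b * s)"
  by (simp add: P3_def s_def)

definition Q1 :: pt where
  "Q1 = (-(a*w/g1), b*(r + c^2*u * s)/g1)"

definition Q2 :: pt where
  "Q2 = (-(a*w/g2), b*(r - c^2*u * s)/g2)"

lemma Q1_on_tangent_P1: "Q1 \<in> tangent_line a b (P1 a b u)"
  using a_pos b_pos g1_nonzero unfolding tangent_line_def Q1_def P1_eq
  apply (simp add: field_simps)
  using c_sq s_sq r_sq unfolding g1_def w_def by algebra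

lemma Q1_on_tangent_P2: "Q1 \<in> tangent_line a b (P2 a b u)"
  using a_pos b_pos c_pos s_pos g1_nonzero unfolding tangent_line_def Q1_def P2_eq
  apply (simp add: field_simps)
  using c_sq s_sq r_sq unfolding g1_def w_def by algebra

lemma Q2_on_tangent_P2: "Q2 \<in> tangent_line a b (P2 a b u)"
  using a_pos b_pos c_pos s_pos g2_nonzero unfolding tangent_line_def Q2_def P2_eq
  apply (simp add: field_simps)
  using c_sq s_sq r_sq unfolding g2_def w_def by algebra

lemma Q2_on_tangent_P3: "Q2 \<in> tangent_line a b (P3 a b u)"
  using a_pos b_pos g2_nonzero unfolding tangent_line_def Q2_def P3_eq
  apply (simp add: field_simps)
  using c_sq s_sq r_sq unfolding g2_def w_def by algebra

lemma P1_P2_independent: "fst (P1 a b u) * snd (P2 a b u) \<noteq> snd (P1 a b u) * fst (P2 a b u)"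
proof -
  have "fst (P1 a b u) * snd (P2 a b u) - snd (P1 a b u) * fst (P2 a b u) = a * b * g1 / (c^2 * s)"
    using c_pos s_pos unfolding P1_eq P2_eq g1_def by (simp add: field_simps power3_eq_cube power2_eq_square)
  then show ?thesis using a_pos b_pos c_pos s_pos g1_nonzero by auto
qed

lemma P2_P3_independent: "fst (P2 a b u) * snd (P3 a b u) \<noteq> snd (P2 a b u) * fst (P3 a b u)"
proof -
  have "fst (P2 a b u) * snd (P3 a b u) - snd (P2 a b u) * fst (P3 a b u) = - a * b * g2 / (c^2 * s)"
    using c_pos s_pos unfolding P2_eq P3_eq g2_def by (simp add: field_simps power3_eq_cube power2_eq_square)
  then show ?thesis using a_pos b_pos c_pos s_pos g2_nonzero by auto
qed

lemma tangent_meet_P1_P2: "tangent_meet a b (P1 a b u) (P2 a b u) = Q1"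
  using a_pos b_pos P1_P2_independent Q1_on_tangent_P1 Q1_on_tangent_P2
  by (intro tangent_meet_eqI) auto

lemma tangent_meet_P2_P3: "tangent_meet a b (P2 a b u) (P3 a b u) = Q2"
  using a_pos b_pos P2_P3_independent Q2_on_tangent_P2 Q2_on_tangent_P3
  by (intro tangent_meet_eqI) auto

lemma tangent_meet_P3_P4: "tangent_meet a b (P3 a b u) (P4 a b u) = reflect_y_axis Q1"
  unfolding P3_eq_reflect P4_eq_reflect
  using a_pos b_pos P1_P2_independent Q1_on_tangent_P1 Q1_on_tangent_P2
  by (intro tangent_meet_reflect) auto

lemma tangent_meet_P4_P1: "tangent_meet a b (P4 a b u) (P1 a b u) = reflect_y_axis Q2"
  unfolding P4_eq_reflect P1_eq_reflect
  using a_pos b_pos P2_P3_independent Q2_on_tangent_P2 Q2_on_tangent_P3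
  by (intro tangent_meet_reflect) auto

lemma C_center_eq: "circC_center a b u = (0, (c^2*u^2 - a^2 + 2*b^2) / (2*b * s))"
  by (simp add: circC_center_def Let_def c_def s_def)

lemma C_radius_eq: "circC_radius a b u = (a^2 - c^2*u^2) / (2*b * s)"
  by (simp add: circC_radius_def Let_def c_def s_def)

lemma C'_center_eq: "circC'_center a b u = (0, -(2*b*c^2 * s) / D)"
  by (simp add: circC'_center_def Let_def c_def s_def D_def)

lemma C'_radius_sq: "(circC'_radius a b u)^2 = (c*(c^2*u^2 - a^2) / D)^2"
  unfolding circC'_radius_def Let_def c_def D_def by (rule power2_abs)

lemma focus_on_C: "(norm ((-c, 0) - circC_center a b u))^2 = (circC_radius a b u)^2"
  using b_pos s_pos unfolding C_center_eq C_radius_eq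
  apply (simp add: power2_norm_Pair power_divide field_simps)
  using c_sq s_sq by algebra

lemma P1_on_C: "(norm (P1 a b u - circC_center a b u))^2 = (circC_radius a b u)^2"
  using b_pos s_pos unfolding P1_eq C_center_eq C_radius_eq
  apply (simp add: power2_norm_Pair power_divide field_simps)
  using c_sq s_sq by algebra

lemma P2_on_C: "(norm (P2 a b u - circC_center a b u))^2 = (circC_radius a b u)^2"
  using b_pos c_pos s_pos unfolding P2_eq C_center_eq C_radius_eq
  apply (simp add: power2_norm_Pair power_divide field_simps)
  using c_sq s_sq r_sq by algebra

lemma focus_on_C': "(norm ((-c, 0) - circC'_center a b u))^2 = (circC'_radius a b u)^2"
  using D_nonzero unfolding C'_center_eq C'_radius_sq
  apply (simp add: power2_norm_Pair power_divide field_simps)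
  using c_sq s_sq unfolding D_def by algebra

lemma Q1_on_C': "(norm (Q1 - circC'_center a b u))^2 = (circC'_radius a b u)^2"
  using D_nonzero g1_nonzero unfolding Q1_def C'_center_eq C'_radius_sq
  apply (simp add: power2_norm_Pair power_divide field_simps)
  using c_sq s_sq r_sq unfolding D_def g1_def w_def by algebra

lemma Q2_on_C': "(norm (Q2 - circC'_center a b u))^2 = (circC'_radius a b u)^2"
  using D_nonzero g2_nonzero unfolding Q2_def C'_center_eq C'_radius_sq
  apply (simp add: power2_norm_Pair power_divide field_simps)
  using c_sq s_sq r_sq unfolding D_def g2_def w_def by algebra

lemma axis_point_not_on_tangent_P1:
  assumes "x^2 = c^2"
  shows "(x, 0) \<notin> tangent_line a b (P1 a b u)"
proof
  assume "(x, 0) \<in> tangent_line a b (P1 a b u)"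
  then have "x * u = a" using a_pos b_pos by (simp add: tangent_line_def P1_eq field_simps power2_eq_square)
  then have "c^2 * u^2 = a^2" using assms by (metis power_mult_distrib)
  then show False using c_u_sq_less by simp
qed

lemma C_center_ne_focus: "circC_center a b u \<noteq> (-c, 0)"
  using c_pos by (simp add: C_center_eq)

lemma C'_center_ne_focus: "circC'_center a b u \<noteq> (-c, 0)"
  using c_pos by (simp add: C'_center_eq)

lemma vertices_on_C:
  "\<forall>X \<in> set [P1 a b u, P2 a b u, P3 a b u, P4 a b u].
     (norm (X - circC_center a b u))^2 = (circC_radius a b u)^2"
  using P1_on_C P2_on_C norm_reflect_y_axis_diff[of "circC_center a b u"]
  by (simp add: P3_eq_reflect P4_eq_reflect C_center_eq)

lemma focus_not_vertex: "(-c, 0) \<notin> set [P1 a b u, P2 a b u, P3 a b u, P4 a b u]"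
  using b_pos c_pos s_pos by (auto simp: P1_eq P2_eq P3_eq P4_eq_reflect reflect_y_axis_def)

lemma outer_vertices_on_C':
  "\<forall>X \<in> set [tangent_meet a b (P1 a b u) (P2 a b u), tangent_meet a b (P2 a b u) (P3 a b u),
             tangent_meet a b (P3 a b u) (P4 a b u), tangent_meet a b (P4 a b u) (P1 a b u)].
     (norm (X - circC'_center a b u))^2 = (circC'_radius a b u)^2"
  using Q1_on_C' Q2_on_C' norm_reflect_y_axis_diff[of "circC'_center a b u"]
  by (simp add: tangent_meet_P1_P2 tangent_meet_P2_P3 tangent_meet_P3_P4 tangent_meet_P4_P1 C'_center_eq)

lemma focus_not_outer_vertex:
  "(-c, 0) \<notin> set [tangent_meet a b (P1 a b u) (P2 a b u), tangent_meet a b (P2 a b u) (P3 a b u),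
                   tangent_meet a b (P3 a b u) (P4 a b u), tangent_meet a b (P4 a b u) (P1 a b u)]"
proof -
  have "reflect_y_axis Q2 \<in> tangent_line a b (P1 a b u)"
    using Q2_on_tangent_P3 tangent_line_reflect[of "reflect_y_axis Q2" a b "P1 a b u"]
    by (simp add: P3_eq_reflect)
  then have "Q1 \<noteq> (c, 0)" "Q1 \<noteq> (-c, 0)" "reflect_y_axis Q2 \<noteq> (c, 0)" "reflect_y_axis Q2 \<noteq> (-c, 0)"
    using Q1_on_tangent_P1 axis_point_not_on_tangent_P1[of c] axis_point_not_on_tangent_P1[of "-c"]
    by auto
  moreover have "reflect_y_axis (c, 0) = (-c, 0)" by (simp add: reflect_y_axis_def)
  ultimately show ?thesis
    unfolding tangent_meet_P1_P2 tangent_meet_P2_P3 tangent_meet_P3_P4 tangent_meet_P4_P1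
    by (auto dest: arg_cong[of _ _ reflect_y_axis])
qed

end

theorem mainTheorem6:
  fixes a b u :: real
  assumes "a > b" "b > 0" "a / b > sqrt 2"
    and "\<bar>u\<bar> < u_max a b"
    and "a^2 + (u^2 - 2) * (focal_c a b)^2 \<noteq> 0"
  shows
    "(let f1 = (- focal_c a b, 0 :: real);
          inv = inversion f1 1;
          P = [P1 a b u, P2 a b u, P3 a b u, P4 a b u];
          Q = [tangent_meet a b (P1 a b u) (P2 a b u), tangent_meet a b (P2 a b u) (P3 a b u),
               tangent_meet a b (P3 a b u) (P4 a b u), tangent_meet a b (P4 a b u) (P1 a b u)]
      in collinear (inv ` set P)
         \<and> inv ` set P \<subseteq> radical_axis f1 1 (circC_center a b u) (circC_radius a b u)
         \<and> collinear (inv ` set Q)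
         \<and> inv ` set Q \<subseteq> radical_axis f1 1 (circC'_center a b u) (circC'_radius a b u))"
proof -
  interpret self_intersected_4periodic a b u
    using assms by unfold_locales auto
  show ?thesis
    unfolding Let_def c_def [symmetric]
    using inversion_image_of_circle_through_pole[OF focus_on_C C_center_ne_focus vertices_on_C
        focus_not_vertex]
      inversion_image_of_circle_through_pole[OF focus_on_C' C'_center_ne_focus outer_vertices_on_C'
        focus_not_outer_vertex]
    by blast
qed

end
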